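(* Fix $x_0\in\mathbb{R}^{n_x}$. There exist a finite positive constant $\alpha_1(x_0)$ and, for each $i\in\{2,\dots,T\}$, a finite set $\mathcal{K}_i$ of sequences of non-negative integers of length $i-1$ and finite positive constants $\alpha_i^{(j_1,\dots,j_{i-1})}(x_0)$ (depending on $x_0$ and $(j_1,\dots,j_{i-1})$ but not on the observations or the control) such that for every control $u\in U$ and every sequence of observations $(y_1,\dots,y_T)$, the solution of the hybrid system starting at $x_0$ satisfies $\|x_1(t)\|_2\le\alpha_1(x_0)$ for all $t\in[0,1]$, and for all $i\in\{2,\dots,T\}$ and $t\in[i-1,i]$, $$\|x_i(t)\|_2\le\sum_{(j_1,\dots,j_{i-1})\in\mathcal{K}_i}\alpha_i^{(j_1,\dots,j_{i-1})}(x_0)\prod_{m=1}^{i-1}\|y_m\|_2^{j_m}.$$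
   Context: Fix positive integers $T,m,n_x,n_y$ and $\rho_{\max}\in(0,\infty)$; $B(0,\rho_{\max})$ is the closed Euclidean ball of radius $\rho_{\max}$ in $\mathbb{R}^m$; $U$ is the set of piecewise continuous $u:[0,T]\to\mathbb{R}^m$ with $\|u(t)\|_2\le\rho_{\max}$ for all $t$. $f:\mathbb{R}^{n_x}\times\mathbb{R}^m\to\mathbb{R}^{n_x}$ is continuously differentiable and there is $K_1\in[1,\infty)$ with $\|f(x',u')-f(x'',u'')\|_2\le K_1(\|x'-x''\|_2+\|u'-u''\|_2)$ for all $x',x''\in\mathbb{R}^{n_x}$, $u',u''\in B(0,\rho_{\max})$. $g:\mathbb{R}^{n_x}\times\mathbb{R}^{n_y}\to\mathbb{R}^{n_x}$ is continuous and differentiable in its first argument, and there are $K_2,\dots,K_5\ge0$ and positive integers $L_1,L_2$ such that for all $x,y$ both $\|g(x,y)\|_2$ and $\|\frac{\partial}{\partial x}g(x,y)\|_2$ are at most $K_2+K_3\|x\|_2^{L_1}+K_4\|y\|_2^{L_2}+K_5\|x\|_2^{L_1}\|y\|_2^{L_2}$. The hybrid system: $x_1$ on $[0,1]$ solves $\dot x_1=f(x_1,u)$, $x_1(0)=x_0$; for $i=2,\dots,T$, $x_i$ on $[i-1,i]$ solves $\dot x_i(t)=f(x_i(t),u(t))$ with $x_i(i-1)=g(x_{i-1}(i-1),y_{i-1})$; $x(t)=x_i(t)$ for $t\in[i-1,i)$, and $x(T)=g(x_T(T),y_T)$. *)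

theory Defs
  imports "HOL-Analysis.Analysis"
begin

definition piecewise_continuous_on :: "real \<Rightarrow> real \<Rightarrow> (real \<Rightarrow> 'a::topological_space) \<Rightarrow> bool" where
  "piecewise_continuous_on a b u \<longleftrightarrow>
     (\<exists>S. finite S \<and>
        (\<forall>t\<in>{a..b} - S. continuous (at t within {a..b}) u) \<and>
        (\<forall>t\<in>S \<inter> {a..b}.
           (t > a \<longrightarrow> (\<exists>l. (u \<longlongrightarrow> l) (at_left t))) \<and>
           (t < b \<longrightarrow> (\<exists>l. (u \<longlongrightarrow> l) (at_right t)))))"

definition admissible_controls :: "nat \<Rightarrow> real \<Rightarrow> (real \<Rightarrow> 'u::euclidean_space) set" where
  "admissible_controls T \<rho> =
     {u. piecewise_continuous_on 0 (real T) u \<and> (\<forall>t\<in>{0..real T}. norm (u t) \<le> \<rho>)}"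

text \<open>x solves x' = f(x,u) on [a,b] (in the Caratheodory / integral sense) with initial value x a = x0.\<close>
definition solves_on :: "('x::euclidean_space \<Rightarrow> 'u \<Rightarrow> 'x) \<Rightarrow> (real \<Rightarrow> 'u) \<Rightarrow> real \<Rightarrow> real \<Rightarrow> 'x \<Rightarrow> (real \<Rightarrow> 'x) \<Rightarrow> bool" where
  "solves_on f u a b x0 x \<longleftrightarrow>
     x a = x0 \<and> continuous_on {a..b} x \<and>
     (\<forall>t\<in>{a..b}. ((\<lambda>s. f (x s) (u s)) has_integral (x t - x a)) {a..t})"

text \<open>The hybrid system: xs i is the i-th arc on [i-1,i], i = 1..T.\<close>
definition hybrid_solution ::
  "('x::euclidean_space \<Rightarrow> 'u \<Rightarrow> 'x) \<Rightarrow> ('x \<Rightarrow> 'y \<Rightarrow> 'x) \<Rightarrow> nat \<Rightarrow> 'x \<Rightarrow> (real \<Rightarrow> 'u)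
     \<Rightarrow> (nat \<Rightarrow> 'y) \<Rightarrow> (nat \<Rightarrow> real \<Rightarrow> 'x) \<Rightarrow> bool" where
  "hybrid_solution f g T x0 u y xs \<longleftrightarrow>
     solves_on f u 0 1 x0 (xs 1) \<and>
     (\<forall>i\<in>{2..T}. solves_on f u (real i - 1) (real i)
                   (g (xs (i - 1) (real i - 1)) (y (i - 1))) (xs i))"

end

theory Submission
  imports Defs
begin

text \<open>By the Lipschitz bound, \<open>f x v\<close> grows at most linearly in \<open>x\<close> for admissible
  control values, so Gronwall's inequality bounds every arc, which lives on a time interval of
  length 1, by \<open>(norm z + norm (f 0 0) + K1 * \<rho>) * exp K1\<close>, where \<open>z\<close> is its initial value.
  The reset map \<open>g\<close> grows polynomially, so induction over the arcs bounds \<open>xs (Suc n)\<close> by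
  \<open>c\<^sub>n * W\<^sub>n ^ E\<^sub>n\<close> with \<open>W\<^sub>n = (\<Prod>m\<in>{1..n}. max 1 (norm (y m)))\<close> and
  \<open>E\<^sub>n\<^sub>+\<^sub>1 = E\<^sub>n * L1 + L2\<close>. Finally \<open>W\<^sub>n ^ E\<^sub>n\<close> is itself one of the monomials
  \<open>\<Prod>m\<in>{1..n}. norm (y m) ^ j\<^sub>m\<close> with all \<open>j\<^sub>m \<in> {0, E\<^sub>n}\<close>.\<close>

lemma gronwall_inequality:
  fixes w :: "real \<Rightarrow> real"
  assumes cont: "continuous_on {a..b} w" and K: "K \<ge> 0"
    and le: "\<And>t. t \<in> {a..b} \<Longrightarrow> w t \<le> B + K * integral {a..t} w"
    and t: "t \<in> {a..b}"
  shows "w t \<le> B * exp (K * (t - a))"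
proof -
  define \<psi> where "\<psi> s = exp (- (K * (s - a))) * (B + K * integral {a..s} w)" for s
  define \<psi>' where "\<psi>' s = K * exp (- (K * (s - a))) * (w s - B - K * integral {a..s} w)" for s
  have der: "(\<psi> has_real_derivative \<psi>' s) (at s within {a..b})" if "s \<in> {a..b}" for s
    unfolding \<psi>_def \<psi>'_def
    by (rule derivative_eq_intros integral_has_real_derivative[OF cont that] | simp)+
       (simp add: algebra_simps)
  have "\<psi> t \<le> \<psi> a"
  proof (rule DERIV_nonpos_imp_decreasing_open[of a t \<psi>])
    show "a \<le> t" using t by simp
  next
    fix s assume s: "a < s" "s < t"
    then have "at s within {a..b} = at s" using t by (intro at_within_Icc_at) auto
    with der[of s] s t have "(\<psi> has_real_derivative \<psi>' s) (at s)" by auto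
    moreover have "\<psi>' s \<le> 0"
      unfolding \<psi>'_def using le[of s] s t K by (intro mult_nonneg_nonpos) auto
    ultimately show "\<exists>y. (\<psi> has_real_derivative y) (at s) \<and> y \<le> 0" by blast
  next
    have "continuous_on {a..b} \<psi>"
      using der by (intro has_derivative_continuous_on) (auto simp: has_field_derivative_def)
    then show "continuous_on {a..t} \<psi>" by (rule continuous_on_subset) (use t in auto)
  qed
  then have "exp (- (K * (t - a))) * (B + K * integral {a..t} w) \<le> B"
    by (simp add: \<psi>_def)
  then have "exp (K * (t - a)) * (exp (- (K * (t - a))) * (B + K * integral {a..t} w))
      \<le> B * exp (K * (t - a))"
    by (simp add: mult.commute)
  then have "B + K * integral {a..t} w \<le> B * exp (K * (t - a))"
    by (simp add: exp_minus_inverse mult.assoc[symmetric])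
  with le[OF t] show ?thesis by linarith
qed

lemma solves_on_norm_le:
  fixes f :: "'x::euclidean_space \<Rightarrow> 'u \<Rightarrow> 'x"
  assumes sol: "solves_on f u a b z x" and C: "C \<ge> 0" and K: "K \<ge> 0"
    and growth: "\<And>s. s \<in> {a..b} \<Longrightarrow> norm (f (x s) (u s)) \<le> C + K * norm (x s)"
    and t: "t \<in> {a..b}"
  shows "norm (x t) \<le> (norm z + C * (b - a)) * exp (K * (b - a))"
proof -
  define B where "B = norm z + C * (b - a)"
  have cont: "continuous_on {a..b} (\<lambda>s. norm (x s))"
    and integral: "\<And>s. s \<in> {a..b} \<Longrightarrow> ((\<lambda>r. f (x r) (u r)) has_integral (x s - z)) {a..s}"
    using sol unfolding solves_on_def by (auto intro: continuous_intros)
  have integral_le: "norm (x s) \<le> B + K * integral {a..s} (\<lambda>r. norm (x r))"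
    if s: "s \<in> {a..b}" for s
  proof -
    have "(\<lambda>r. norm (x r)) integrable_on {a..s}"
      using cont s by (intro integrable_continuous_real) (auto elim: continuous_on_subset)
    then have int: "((\<lambda>r. C + K * norm (x r))
        has_integral (C * (s - a) + K * integral {a..s} (\<lambda>r. norm (x r)))) {a..s}"
      using s has_integral_const_real[of C a s]
      by (intro has_integral_add has_integral_mult_right integrable_integral) (auto simp: mult.commute)
    have "norm (integral {a..s} (\<lambda>r. f (x r) (u r))) \<le> integral {a..s} (\<lambda>r. C + K * norm (x r))"
      by (rule integral_norm_bound_integral) (use integral[OF s] int growth s in auto)
    then have "norm (x s - z) \<le> C * (s - a) + K * integral {a..s} (\<lambda>r. norm (x r))"
      using integral[OF s] int by (simp add: integral_unique)
    moreover have "C * (s - a) \<le> C * (b - a)"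
      using s C by (intro mult_left_mono) auto
    ultimately show ?thesis
      unfolding B_def using norm_triangle_ineq2[of "x s" z] by linarith
  qed
  have "norm (x t) \<le> B * exp (K * (t - a))"
    by (rule gronwall_inequality[OF cont K integral_le t])
  also have "\<dots> \<le> B * exp (K * (b - a))"
    using t K C unfolding B_def by (intro mult_left_mono) (auto simp: mult_left_mono)
  finally show ?thesis by (simp add: B_def)
qed

lemma bilinear_le_coeff_sum_mult:
  fixes k0 k1 k2 k3 p q M N :: real
  assumes "0 \<le> k0" "0 \<le> k1" "0 \<le> k2" "0 \<le> k3"
    and "0 \<le> p" "p \<le> M" "0 \<le> q" "q \<le> N" "1 \<le> M" "1 \<le> N"
  shows "k0 + k1 * p + k2 * q + k3 * p * q \<le> (k0 + k1 + k2 + k3) * (M * N)"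
proof -
  have "1 * 1 \<le> M * N" "p * 1 \<le> M * N" "1 * q \<le> M * N" "p * q \<le> M * N"
    using assms by (intro mult_mono; simp)+
  then have "k0 * 1 \<le> k0 * (M * N)" "k1 * p \<le> k1 * (M * N)" "k2 * q \<le> k2 * (M * N)"
      "k3 * (p * q) \<le> k3 * (M * N)"
    using assms by (intro mult_left_mono; simp)+
  then show ?thesis by (simp add: algebra_simps)
qed

lemma prod_max_1_power_le_sum_monomials:
  fixes a :: "nat \<Rightarrow> real"
  assumes a_nonneg: "\<And>m. 0 \<le> a m"
  shows "(\<Prod>m\<in>{1..n}. max 1 (a m)) ^ E
    \<le> (\<Sum>js\<in>{js. set js \<subseteq> {0, E} \<and> length js = n}. \<Prod>m\<in>{1..n}. a m ^ (js ! (m - 1)))"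
proof -
  \<comment> \<open>the monomial with exponent \<open>E\<close> exactly where \<open>a m \<ge> 1\<close> is the left-hand side\<close>
  define js where "js = map (\<lambda>m. if 1 \<le> a m then E else 0) [1..<Suc n]"
  have "(\<Prod>m\<in>{1..n}. max 1 (a m)) ^ E = (\<Prod>m\<in>{1..n}. a m ^ (js ! (m - 1)))"
    unfolding prod_power_distrib
  proof (rule prod.cong)
    fix m assume "m \<in> {1..n}"
    then have "js ! (m - 1) = (if 1 \<le> a m then E else 0)"
      by (auto simp: js_def nth_map simp del: upt_Suc)
    then show "max 1 (a m) ^ E = a m ^ (js ! (m - 1))" by simp
  qed simp
  also have "\<dots> \<le> (\<Sum>js\<in>{js. set js \<subseteq> {0, E} \<and> length js = n}. \<Prod>m\<in>{1..n}. a m ^ (js ! (m - 1)))"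
    by (rule member_le_sum) (auto simp: js_def a_nonneg prod_nonneg finite_lists_length_eq)
  finally show ?thesis .
qed

locale hybrid_growth =
  fixes f :: "'x::euclidean_space \<Rightarrow> 'u::euclidean_space \<Rightarrow> 'x"
    and g :: "'x \<Rightarrow> 'y::euclidean_space \<Rightarrow> 'x"
    and \<rho> K1 K2 K3 K4 K5 :: real and L1 L2 :: nat
  assumes \<rho>_nonneg: "0 \<le> \<rho>" and K1_nonneg: "0 \<le> K1"
    and f_lip: "\<And>x1 x2 v1 v2. norm v1 \<le> \<rho> \<Longrightarrow> norm v2 \<le> \<rho> \<Longrightarrow>
                 norm (f x1 v1 - f x2 v2) \<le> K1 * (norm (x1 - x2) + norm (v1 - v2))"
    and K_nonneg: "0 \<le> K2" "0 \<le> K3" "0 \<le> K4" "0 \<le> K5"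
    and g_bound: "\<And>x y. norm (g x y) \<le>
                   K2 + K3 * norm x ^ L1 + K4 * norm y ^ L2 + K5 * norm x ^ L1 * norm y ^ L2"
begin

lemma f_norm_le:
  assumes "norm v \<le> \<rho>"
  shows "norm (f x v) \<le> norm (f 0 0) + K1 * \<rho> + K1 * norm x"
proof -
  have "norm (f x v - f 0 0) \<le> K1 * (norm x + norm v)"
    using f_lip[of v 0 x 0] assms \<rho>_nonneg by simp
  also have "\<dots> \<le> K1 * norm x + K1 * \<rho>"
    using assms K1_nonneg by (simp add: algebra_simps mult_left_mono)
  finally show ?thesis using norm_triangle_ineq2[of "f x v" "f 0 0"] by linarith
qed

lemma arc_norm_le:
  assumes sol: "solves_on f u a b z x" and b: "b \<le> a + 1"
    and u: "\<And>s. s \<in> {a..b} \<Longrightarrow> norm (u s) \<le> \<rho>" and t: "t \<in> {a..b}"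
  shows "norm (x t) \<le> (norm z + norm (f 0 0) + K1 * \<rho>) * exp K1"
proof -
  define C where "C = norm (f 0 0) + K1 * \<rho>"
  have C: "0 \<le> C" using \<rho>_nonneg K1_nonneg by (simp add: C_def)
  have "norm (x t) \<le> (norm z + C * (b - a)) * exp (K1 * (b - a))"
    using solves_on_norm_le[OF sol C K1_nonneg _ t] f_norm_le u by (simp add: C_def)
  also have "\<dots> \<le> (norm z + C) * exp K1"
    using t b C K1_nonneg
    by (intro mult_mono add_left_mono) (auto simp: mult_left_le)
  finally show ?thesis by (simp add: C_def add.assoc)
qed

lemma g_norm_le:
  assumes x: "norm x \<le> c * P ^ E" and c: "1 \<le> c" and P: "1 \<le> P"
  shows "norm (g x w) \<le> (K2 + K3 + K4 + K5) * c ^ L1 * (P * max 1 (norm w)) ^ (E * L1 + L2)"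
proof -
  define W where "W = max 1 (norm w)"
  have W: "1 \<le> W" "norm w \<le> W" by (simp_all add: W_def)
  have "norm x ^ L1 \<le> c ^ L1 * P ^ (E * L1)"
    using power_mono[OF x, of L1] by (simp add: power_mult_distrib power_mult)
  moreover have "1 * 1 \<le> c ^ L1 * P ^ (E * L1)"
    using c P by (intro mult_mono one_le_power) auto
  moreover have "norm w ^ L2 \<le> W ^ L2" "1 \<le> W ^ L2"
    using W by (auto intro: power_mono one_le_power)
  ultimately have "norm (g x w) \<le> (K2 + K3 + K4 + K5) * (c ^ L1 * (P ^ (E * L1) * W ^ L2))"
    using g_bound[of x w] bilinear_le_coeff_sum_mult[OF K_nonneg,
        of "norm x ^ L1" "c ^ L1 * P ^ (E * L1)" "norm w ^ L2" "W ^ L2"]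
    by (simp add: mult.assoc)
  also have "\<dots> \<le> (K2 + K3 + K4 + K5) * (c ^ L1 * ((P * W) ^ (E * L1) * (P * W) ^ L2))"
  proof -
    have "P \<le> P * W" "W \<le> P * W"
      using P W by (simp_all add: mult_le_cancel_left1 mult_le_cancel_right1)
    then show ?thesis
      using K_nonneg c P by (intro mult_left_mono mult_mono power_mono) auto
  qed
  finally show ?thesis by (simp add: W_def power_add mult.assoc)
qed

primrec arc_coeff :: "'x \<Rightarrow> nat \<Rightarrow> real" where
  "arc_coeff x0 0 = max 1 ((norm x0 + norm (f 0 0) + K1 * \<rho>) * exp K1)"
| "arc_coeff x0 (Suc n) =
     max 1 (((K2 + K3 + K4 + K5) * arc_coeff x0 n ^ L1 + norm (f 0 0) + K1 * \<rho>) * exp K1)"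

primrec arc_degree :: "nat \<Rightarrow> nat" where
  "arc_degree 0 = 0"
| "arc_degree (Suc n) = arc_degree n * L1 + L2"

lemma arc_coeff_ge_1: "1 \<le> arc_coeff x0 n"
  by (cases n) auto

lemma hybrid_solution_norm_le:
  assumes hs: "hybrid_solution f g T x0 u y xs"
    and u: "\<And>t. t \<in> {0..real T} \<Longrightarrow> norm (u t) \<le> \<rho>"
    and n: "n < T" and t: "t \<in> {real n..real n + 1}"
  shows "norm (xs (Suc n) t) \<le> arc_coeff x0 n * (\<Prod>m\<in>{1..n}. max 1 (norm (y m))) ^ arc_degree n"
  using n t
proof (induction n arbitrary: t)
  case 0
  have "solves_on f u 0 1 x0 (xs 1)" using hs by (simp add: hybrid_solution_def)
  then have "norm (xs 1 t) \<le> (norm x0 + norm (f 0 0) + K1 * \<rho>) * exp K1"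
    by (rule arc_norm_le) (use 0 u in auto)
  then show ?case by simp
next
  case (Suc n)
  define W where "W = (\<Prod>m\<in>{1..n}. max 1 (norm (y m)))"
  define W' where "W' = (\<Prod>m\<in>{1..Suc n}. max 1 (norm (y m)))"
  define z where "z = g (xs (Suc n) (real (Suc n))) (y (Suc n))"
  have W: "1 \<le> W" and W': "1 \<le> W'"
    unfolding W_def W'_def by (rule prod_ge_1; simp)+
  have W'_eq: "W' = W * max 1 (norm (y (Suc n)))"
    by (simp add: W_def W'_def atLeastAtMostSuc_conv)
  have "norm (xs (Suc n) (real (Suc n))) \<le> arc_coeff x0 n * W ^ arc_degree n"
    using Suc by (simp add: W_def)
  then have z: "norm z \<le> (K2 + K3 + K4 + K5) * arc_coeff x0 n ^ L1 * W' ^ arc_degree (Suc n)"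
    unfolding z_def W'_eq by (simp add: g_norm_le arc_coeff_ge_1 W)
  have "solves_on f u (real (Suc n)) (real (Suc n) + 1) z (xs (Suc (Suc n)))"
    using hs Suc.prems unfolding hybrid_solution_def z_def
    by (auto dest!: bspec[of _ _ "Suc (Suc n)"])
  then have "norm (xs (Suc (Suc n)) t) \<le> (norm z + norm (f 0 0) + K1 * \<rho>) * exp K1"
    by (rule arc_norm_le) (use Suc.prems u in auto)
  also have "\<dots> \<le> (((K2 + K3 + K4 + K5) * arc_coeff x0 n ^ L1 + norm (f 0 0) + K1 * \<rho>) * exp K1)
      * W' ^ arc_degree (Suc n)"
  proof -
    have "1 \<le> W' ^ arc_degree (Suc n)" using W' by simp
    then have "(norm (f 0 0) + K1 * \<rho>) * 1 \<le> (norm (f 0 0) + K1 * \<rho>) * W' ^ arc_degree (Suc n)"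
      using \<rho>_nonneg K1_nonneg by (intro mult_left_mono) auto
    with z have "norm z + norm (f 0 0) + K1 * \<rho>
        \<le> ((K2 + K3 + K4 + K5) * arc_coeff x0 n ^ L1 + norm (f 0 0) + K1 * \<rho>) * W' ^ arc_degree (Suc n)"
      by (simp add: algebra_simps)
    from mult_right_mono[OF this, of "exp K1"] show ?thesis by (simp add: ac_simps)
  qed
  also have "\<dots> \<le> arc_coeff x0 (Suc n) * W' ^ arc_degree (Suc n)"
    using W' by (intro mult_right_mono) auto
  finally show ?case by (simp add: W'_def)
qed

lemma hybrid_solution_norm_le_sum_monomials:
  assumes "hybrid_solution f g T x0 u y xs"
    and "\<And>t. t \<in> {0..real T} \<Longrightarrow> norm (u t) \<le> \<rho>"
    and "n < T" and "t \<in> {real n..real n + 1}"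
  shows "norm (xs (Suc n) t) \<le> (\<Sum>js\<in>{js. set js \<subseteq> {0, arc_degree n} \<and> length js = n}.
           arc_coeff x0 n * (\<Prod>m\<in>{1..n}. norm (y m) ^ (js ! (m - 1))))"
proof -
  have "norm (xs (Suc n) t) \<le> arc_coeff x0 n * (\<Prod>m\<in>{1..n}. max 1 (norm (y m))) ^ arc_degree n"
    by (rule hybrid_solution_norm_le[OF assms])
  also have "\<dots> \<le> arc_coeff x0 n * (\<Sum>js\<in>{js. set js \<subseteq> {0, arc_degree n} \<and> length js = n}.
      \<Prod>m\<in>{1..n}. norm (y m) ^ (js ! (m - 1)))"
    using arc_coeff_ge_1[of x0 n] by (intro mult_left_mono prod_max_1_power_le_sum_monomials) auto
  finally show ?thesis by (simp add: sum_distrib_left)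
qed

end

theorem proposition6:
  fixes f :: "'x::euclidean_space \<Rightarrow> 'u::euclidean_space \<Rightarrow> 'x"
    and g :: "'x \<Rightarrow> 'y::euclidean_space \<Rightarrow> 'x"
    and g' :: "'x \<Rightarrow> 'y \<Rightarrow> ('x \<Rightarrow>\<^sub>L 'x)"
    and T :: nat and \<rho> K1 K2 K3 K4 K5 :: real and L1 L2 :: nat and x0 :: 'x
  assumes T_pos: "T \<ge> 1"
    and \<rho>_pos: "0 < \<rho>"
    and f_C1: "\<exists>f' :: 'x \<times> 'u \<Rightarrow> (('x \<times> 'u) \<Rightarrow>\<^sub>L 'x).
                 (\<forall>p. ((\<lambda>(x, v). f x v) has_derivative blinfun_apply (f' p)) (at p))
                 \<and> continuous_on UNIV f'"
    and K1: "K1 \<ge> 1"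
    and f_lip: "\<And>x1 x2 v1 v2. norm v1 \<le> \<rho> \<Longrightarrow> norm v2 \<le> \<rho> \<Longrightarrow>
                 norm (f x1 v1 - f x2 v2) \<le> K1 * (norm (x1 - x2) + norm (v1 - v2))"
    and g_cont: "continuous_on UNIV (\<lambda>(x, y). g x y)"
    and g_diff: "\<And>x y. ((\<lambda>z. g z y) has_derivative blinfun_apply (g' x y)) (at x)"
    and K_nonneg: "K2 \<ge> 0" "K3 \<ge> 0" "K4 \<ge> 0" "K5 \<ge> 0"
    and L_pos: "L1 \<ge> 1" "L2 \<ge> 1"
    and g_bound: "\<And>x y. norm (g x y) \<le>
                   K2 + K3 * norm x ^ L1 + K4 * norm y ^ L2 + K5 * norm x ^ L1 * norm y ^ L2"
    and g'_bound: "\<And>x y. norm (g' x y) \<le>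
                   K2 + K3 * norm x ^ L1 + K4 * norm y ^ L2 + K5 * norm x ^ L1 * norm y ^ L2"
  shows "\<exists>(\<alpha>1::real) (\<K>::nat \<Rightarrow> nat list set) (\<alpha>::nat \<Rightarrow> nat list \<Rightarrow> real).
           0 < \<alpha>1 \<and>
           (\<forall>i\<in>{2..T}. finite (\<K> i) \<and> (\<forall>js\<in>\<K> i. length js = i - 1 \<and> 0 < \<alpha> i js)) \<and>
           (\<forall>u\<in>admissible_controls T \<rho>. \<forall>(y::nat \<Rightarrow> 'y) xs.
              hybrid_solution f g T x0 u y xs \<longrightarrow>
                (\<forall>t\<in>{0..1}. norm (xs 1 t) \<le> \<alpha>1) \<and>
                (\<forall>i\<in>{2..T}. \<forall>t\<in>{real i - 1..real i}.
                   norm (xs i t) \<le>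
                     (\<Sum>js\<in>\<K> i. \<alpha> i js * (\<Prod>m\<in>{1..i - 1}. norm (y m) ^ (js ! (m - 1))))))"
proof -
  interpret hybrid_growth f g \<rho> K1 K2 K3 K4 K5 L1 L2
    using \<rho>_pos K1 f_lip K_nonneg g_bound by unfold_locales auto
  define \<K> where "\<K> i = {js. set js \<subseteq> {0, arc_degree (i - 1)} \<and> length js = i - 1}" for i
  show ?thesis
  proof (intro exI[of _ "arc_coeff x0 0"] exI[of _ \<K>] exI[of _ "\<lambda>i js. arc_coeff x0 (i - 1)"]
      conjI ballI allI impI)
    fix u y xs t
    assume "u \<in> admissible_controls T \<rho>" "hybrid_solution f g T x0 u y xs" "t \<in> {0..1::real}"
    then show "norm (xs 1 t) \<le> arc_coeff x0 0"
      using hybrid_solution_norm_le[of T x0 u y xs 0 t] T_pos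
      by (simp add: admissible_controls_def)
  next
    fix u y xs i t
    assume "u \<in> admissible_controls T \<rho>" "hybrid_solution f g T x0 u y xs"
      and "i \<in> {2..T}" "t \<in> {real i - 1..real i}"
    moreover from \<open>i \<in> {2..T}\<close> obtain n where "i = Suc n" by (cases i) auto
    ultimately show "norm (xs i t) \<le>
        (\<Sum>js\<in>\<K> i. arc_coeff x0 (i - 1) * (\<Prod>m\<in>{1..i - 1}. norm (y m) ^ (js ! (m - 1))))"
      using hybrid_solution_norm_le_sum_monomials[of T x0 u y xs n t]
      by (simp add: \<K>_def admissible_controls_def)
  qed (auto simp: \<K>_def finite_lists_length_eq arc_coeff_ge_1 less_le_trans[OF zero_less_one])
qed

end
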